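(* If $\mathbb{A}_1,\mathbb{A}_2$ are $C$-asymptotic sets, then the Minkowski sum $\mathbb{A}_1+\mathbb{A}_2$ is also a $C$-asymptotic set.
   Context: $C\subset\mathbb{R}^n$ ($n\ge2$) is a pointed closed convex cone with nonempty interior. A $C$-asymptotic set is an unbounded closed convex set $\mathbb{A}\subset C$ with nonempty interior and $o\notin\mathbb{A}$ such that $\lim_{x\in\partial\mathbb{A},|x|\to\infty}d(x,\partial C)=0$. *)

theory Defs
  imports "HOL-Analysis.Analysis"
begin

definition pointed_cc_cone :: "'a::euclidean_space set \<Rightarrow> bool" where
  "pointed_cc_cone C \<longleftrightarrow> cone C \<and> convex C \<and> closed C \<and> interior C \<noteq> {}
      \<and> C \<inter> uminus ` C = {0}"

definition C_asymptotic :: "'a::euclidean_space set \<Rightarrow> 'a set \<Rightarrow> bool" where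
  "C_asymptotic C A \<longleftrightarrow> \<not> bounded A \<and> closed A \<and> convex A \<and> interior A \<noteq> {}
      \<and> A \<subseteq> C \<and> 0 \<notin> A
      \<and> (\<forall>e>0. \<exists>R. \<forall>x\<in>frontier A. norm x > R \<longrightarrow> infdist x (frontier C) < e)"

definition minkowski_sum :: "'a::real_vector set \<Rightarrow> 'a set \<Rightarrow> 'a set" where
  "minkowski_sum A B = {a + b | a b. a \<in> A \<and> b \<in> B}"

end

theory Submission
  imports Defs
begin

text \<open>Since \<open>C\<close> is pointed, some linear functional \<open>w\<close> dominates \<open>\<kappa> * norm\<close> on \<open>C\<close>.
  For a \<open>C\<close>-asymptotic set \<open>A\<close>, the points far out in direction \<open>w\<close> whose \<open>e\<close>-ball lies in \<open>C\<close>
  form a convex set that misses the frontier of \<open>A\<close> (its points are \<open>e\<close>-far from the frontier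
  of \<open>C\<close>) but meets \<open>A\<close>; hence all such points lie in \<open>A\<close>. If a far frontier point \<open>x\<close> of
  \<open>A1 + A2\<close> were \<open>e\<close>-far from the frontier of \<open>C\<close>, then \<open>x/2\<close> would lie in \<open>A2\<close> and a ball
  around \<open>x/2\<close> in \<open>A1\<close>, making \<open>x = x/2 + x/2\<close> an interior point of the sum. Closedness of
  the sum comes from compactness of the slices \<open>{w \<bullet> x \<le> M}\<close> of \<open>A1\<close> and \<open>A2\<close>.\<close>

lemma convex_cone_sum:
  assumes "convex_cone S" "\<And>i. i \<in> I \<Longrightarrow> f i \<in> S"
  shows "sum f I \<in> S"
  using assms(2)
proof (induction I rule: infinite_finite_induct)
  case (insert i I)
  then show ?case using assms(1) by (simp add: convex_cone_add)
qed (use assms(1) convex_cone_contains_0 in auto)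

lemma pointed_add_eq_0:
  fixes S :: "'a::ab_group_add set"
  assumes "S \<inter> uminus ` S = {0}" "x \<in> S" "y \<in> S" "x + y = 0"
  shows "x = 0"
proof -
  have "x = - y" using assms(4) by (simp add: add_eq_0_iff2)
  then show ?thesis using assms(1-3) by blast
qed

lemma zero_notin_convex_hull_pointed_cone_sphere:
  assumes "convex_cone S" "S \<inter> uminus ` S = {0}"
  shows "0 \<notin> convex hull (S \<inter> sphere 0 1)"
proof
  assume "0 \<in> convex hull (S \<inter> sphere 0 1)"
  then obtain s u where s: "finite s" "s \<subseteq> S \<inter> sphere 0 1" "\<forall>x\<in>s. 0 \<le> u x"
      "sum u s = 1" "(\<Sum>x\<in>s. u x *\<^sub>R x) = 0"
    unfolding convex_hull_explicit by blast
  obtain v where v: "v \<in> s" "u v > 0"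
    using s(3,4) sum.neutral[of s u] by (metis less_eq_real_def zero_neq_one)
  have "u v *\<^sub>R v \<in> S"
    using s(2) v assms(1) by (auto intro: convex_cone_scaleR)
  moreover have "(\<Sum>x\<in>s - {v}. u x *\<^sub>R x) \<in> S"
    using s(2,3) assms(1) by (auto intro!: convex_cone_sum convex_cone_scaleR)
  moreover have "u v *\<^sub>R v + (\<Sum>x\<in>s - {v}. u x *\<^sub>R x) = 0"
    using s(1,5) v(1) by (simp add: sum.remove)
  ultimately have "u v *\<^sub>R v = 0" by (rule pointed_add_eq_0[OF assms(2)])
  then show False using v s(2) by auto
qed

lemma pointed_closed_convex_cone_coercive_functional:
  fixes S :: "'a::euclidean_space set"
  assumes "convex_cone S" "closed S" "S \<inter> uminus ` S = {0}"
  obtains w \<kappa> where "\<kappa> > 0" "\<And>x. x \<in> S \<Longrightarrow> \<kappa> * norm x \<le> w \<bullet> x"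
proof -
  let ?K = "S \<inter> sphere 0 1"
  have "closed (convex hull ?K)"
    by (simp add: assms(2) closed_Int_compact compact_convex_hull compact_imp_closed)
  then obtain w b where "0 < b" and wb: "\<And>x. x \<in> convex hull ?K \<Longrightarrow> w \<bullet> x > b"
    using separating_hyperplane_closed_0[OF convex_convex_hull _ zero_notin_convex_hull_pointed_cone_sphere[OF assms(1,3)]]
    by blast
  have "b * norm x \<le> w \<bullet> x" if "x \<in> S" for x
  proof (cases "x = 0")
    case False
    have "x /\<^sub>R norm x \<in> S"
      using that assms(1) by (simp add: convex_cone_scaleR)
    with False have "x /\<^sub>R norm x \<in> convex hull ?K"
      by (intro hull_inc) simp
    then have "b < w \<bullet> (x /\<^sub>R norm x)" by (rule wb)
    then have "b < (w \<bullet> x) / norm x" by (simp add: divide_inverse_commute)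
    then show ?thesis using False by (simp add: field_simps)
  qed simp
  then show ?thesis using that \<open>0 < b\<close> by blast
qed

lemma ball_subset_imp_le_infdist_frontier:
  assumes "ball x e \<subseteq> S" "frontier S \<noteq> {}"
  shows "e \<le> infdist x (frontier S)"
proof -
  have "ball x e \<subseteq> interior S" using assms(1) by (rule interior_maximal) simp
  then have "e \<le> dist x y" if "y \<in> frontier S" for y
    using that by (force simp: frontier_def)
  then show ?thesis using assms(2) by (simp add: infdist_notempty cINF_greatest)
qed

lemma le_infdist_frontier_imp_ball_subset:
  fixes S :: "'a::euclidean_space set"
  assumes "x \<in> S" "e \<le> infdist x (frontier S)"
  shows "ball x e \<subseteq> S"
proof
  fix z assume z: "z \<in> ball x e"
  show "z \<in> S"
  proof (rule ccontr)
    assume "z \<notin> S"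
    then obtain y where y: "y \<in> closed_segment x z" "y \<in> frontier S"
      using connected_Int_frontier[of "closed_segment x z" S] assms(1) by auto
    have "infdist x (frontier S) \<le> dist x y" using y(2) by (rule infdist_le)
    also have "\<dots> \<le> dist x z" using dist_in_closed_segment[OF y(1)] by (simp add: dist_commute)
    finally show False using z assms(2) by simp
  qed
qed

lemma convex_ball_subset_centres:
  fixes S :: "'a::real_normed_vector set"
  assumes "convex S"
  shows "convex {y. ball y e \<subseteq> S}"
proof -
  have "{y. ball y e \<subseteq> S} = (\<Inter>d\<in>ball 0 e. (+) (- d) ` S)"
  proof (intro set_eqI)
    fix y :: 'a
    have "ball y e = (+) y ` ball 0 e" by simp
    then have "ball y e \<subseteq> S \<longleftrightarrow> (\<forall>d\<in>ball 0 e. y + d \<in> S)" by (simp only: image_subset_iff)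
    moreover have "y + d \<in> S \<longleftrightarrow> y \<in> (+) (- d) ` S" for d
      by (auto intro!: image_eqI[where x = "y + d"])
    ultimately show "y \<in> {y. ball y e \<subseteq> S} \<longleftrightarrow> y \<in> (\<Inter>d\<in>ball 0 e. (+) (- d) ` S)" by simp
  qed
  then show ?thesis using assms by (simp add: convex_INT convex_translation)
qed

lemma convex_ball_shrink_subset:
  fixes S :: "'a::real_normed_vector set"
  assumes "convex S" "ball p r \<subseteq> S" "a \<in> S" "0 \<le> u" "u < 1"
  shows "ball ((1 - u) *\<^sub>R p + u *\<^sub>R a) ((1 - u) * r) \<subseteq> S"
proof
  let ?c = "(1 - u) *\<^sub>R p + u *\<^sub>R a"
  fix z assume z: "z \<in> ball ?c ((1 - u) * r)"
  define q where "q = p + (z - ?c) /\<^sub>R (1 - u)"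
  have "dist p q = norm ((z - ?c) /\<^sub>R (1 - u))"
    by (simp add: q_def dist_commute dist_norm)
  also have "\<dots> = dist ?c z / (1 - u)"
    using assms(5) by (simp add: dist_norm norm_minus_commute divide_inverse_commute)
  finally have "dist p q = dist ?c z / (1 - u)" .
  then have "q \<in> S" using z assms(2,5) by (auto simp: pos_divide_less_eq mult.commute)
  then have "(1 - u) *\<^sub>R q + u *\<^sub>R a \<in> S" using assms(1,3-5) by (simp add: convexD)
  moreover have "(1 - u) *\<^sub>R q = (1 - u) *\<^sub>R p + (z - ?c)"
    using assms(5) by (simp add: q_def scaleR_add_right)
  then have "(1 - u) *\<^sub>R q + u *\<^sub>R a = z" by (simp add: algebra_simps)
  ultimately show "z \<in> S" by simp
qed

lemma unbounded_convex_far_ball: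
  fixes A :: "'a::real_inner set"
  assumes "convex A" "\<not> bounded A" "ball p r \<subseteq> A" "\<kappa> > 0"
    and coercive: "\<And>a. a \<in> A \<Longrightarrow> \<kappa> * norm a \<le> w \<bullet> a"
  obtains m where "R < w \<bullet> m" "ball m (r / 2) \<subseteq> A"
proof -
  obtain a where a: "a \<in> A" "(2 * R + norm w * norm p) / \<kappa> < norm a"
    using assms(2) unfolding bounded_iff not_le[symmetric] by blast
  have "2 * R + norm w * norm p < \<kappa> * norm a"
    using a(2) assms(4) by (simp add: pos_divide_less_eq mult.commute)
  also have "\<dots> \<le> w \<bullet> a" using coercive a(1) .
  finally have "2 * R + norm w * norm p < w \<bullet> a" .
  moreover have "- (norm w * norm p) \<le> w \<bullet> p"
    using norm_cauchy_schwarz[of w "- p"] by simp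
  ultimately have "R < w \<bullet> ((1/2) *\<^sub>R p + (1/2) *\<^sub>R a)"
    by (simp add: inner_add_right)
  moreover have "ball ((1/2) *\<^sub>R p + (1/2) *\<^sub>R a) (r / 2) \<subseteq> A"
    using convex_ball_shrink_subset[OF assms(1,3) a(1), of "1/2"] by simp
  ultimately show ?thesis by (rule that)
qed

lemma C_asymptotic_deep_points:
  fixes C A :: "'a::euclidean_space set"
  assumes A: "C_asymptotic C A" and "convex C" "frontier C \<noteq> {}" "\<kappa> > 0"
    and coercive: "\<And>c. c \<in> C \<Longrightarrow> \<kappa> * norm c \<le> w \<bullet> c" and "e > 0"
  obtains R where "\<And>y. R < w \<bullet> y \<Longrightarrow> ball y e \<subseteq> C \<Longrightarrow> y \<in> A"
proof -
  have A': "\<not> bounded A" "convex A" "interior A \<noteq> {}" "A \<subseteq> C"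
    and far: "\<forall>e>0. \<exists>R. \<forall>x\<in>frontier A. R < norm x \<longrightarrow> infdist x (frontier C) < e"
    using A by (auto simp: C_asymptotic_def)
  obtain p where "p \<in> interior A" using A'(3) by blast
  then obtain r where "r > 0" "ball p r \<subseteq> A" by (auto simp: mem_interior)
  define d where "d = min e (r / 2)"
  have "d > 0" using \<open>e > 0\<close> \<open>r > 0\<close> by (simp add: d_def)
  then obtain R0 where R0: "\<And>x. x \<in> frontier A \<Longrightarrow> R0 < norm x \<Longrightarrow> infdist x (frontier C) < d"
    using far by blast
  define R where "R = norm w * max R0 0"
  define D where "D = {y. R < w \<bullet> y} \<inter> {y. ball y d \<subseteq> C}"
  have "connected D"
    unfolding D_def
    by (intro convex_connected convex_Int convex_halfspace_gt convex_ball_subset_centres assms(2))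
  have "D \<inter> frontier A = {}"
  proof (intro equals0I)
    fix y assume y: "y \<in> D \<inter> frontier A"
    have "R0 < norm y"
    proof (rule ccontr)
      assume "\<not> R0 < norm y"
      then have "norm w * norm y \<le> R" by (simp add: R_def mult_left_mono)
      then show False using y norm_cauchy_schwarz[of w y] by (simp add: D_def)
    qed
    then have "infdist y (frontier C) < d" using R0 y by blast
    moreover have "d \<le> infdist y (frontier C)"
      using y ball_subset_imp_le_infdist_frontier[OF _ assms(3)] by (simp add: D_def)
    ultimately show False by simp
  qed
  moreover have "D \<inter> A \<noteq> {}"
  proof -
    obtain m where m: "R < w \<bullet> m" "ball m (r / 2) \<subseteq> A"
      using unbounded_convex_far_ball[OF A'(2,1) \<open>ball p r \<subseteq> A\<close> \<open>\<kappa> > 0\<close>] coercive A'(4)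
      by blast
    moreover have "ball m d \<subseteq> ball m (r / 2)" by (simp add: d_def subset_ball)
    ultimately have "m \<in> D" "m \<in> A" using A'(4) \<open>d > 0\<close> \<open>r > 0\<close> by (auto simp: D_def)
    then show ?thesis by blast
  qed
  ultimately have "D \<subseteq> A" using connected_Int_frontier[OF \<open>connected D\<close>] by blast
  moreover have "ball y d \<subseteq> ball y e" for y by (simp add: d_def subset_ball)
  ultimately show ?thesis using that by (force simp: D_def)
qed

lemma C_asymptotic_deep_balls:
  fixes C A :: "'a::euclidean_space set"
  assumes A: "C_asymptotic C A" and "convex C" "frontier C \<noteq> {}" "\<kappa> > 0"
    and coercive: "\<And>c. c \<in> C \<Longrightarrow> \<kappa> * norm c \<le> w \<bullet> c" and "e > 0"
  obtains R where "\<And>y. R < w \<bullet> y \<Longrightarrow> ball y (2 * e) \<subseteq> C \<Longrightarrow> ball y e \<subseteq> A"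
proof -
  obtain R where R: "\<And>y. R < w \<bullet> y \<Longrightarrow> ball y e \<subseteq> C \<Longrightarrow> y \<in> A"
    using C_asymptotic_deep_points[OF assms] by blast
  show ?thesis
  proof (rule that[of "R + norm w * e"], rule subsetI)
    fix y z assume y: "R + norm w * e < w \<bullet> y" "ball y (2 * e) \<subseteq> C" and z: "z \<in> ball y e"
    have "ball z e \<subseteq> ball y (2 * e)"
    proof
      fix q assume "q \<in> ball z e"
      then show "q \<in> ball y (2 * e)" using z dist_triangle[of y q z] by simp
    qed
    moreover have "w \<bullet> (y - z) \<le> norm w * e"
      using norm_cauchy_schwarz[of w "y - z"] z mult_left_mono[of "norm (y - z)" e "norm w"]
      by (simp add: dist_norm)
    ultimately show "z \<in> A" using R y by (simp add: inner_diff_right)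
  qed
qed

lemma conic_ball_scaleR_subset:
  fixes S :: "'a::real_normed_vector set"
  assumes "conic S" "ball x e \<subseteq> S" "c > 0"
  shows "ball (c *\<^sub>R x) (c * e) \<subseteq> S"
proof
  fix z assume "z \<in> ball (c *\<^sub>R x) (c * e)"
  moreover have "c *\<^sub>R x - z = c *\<^sub>R (x - z /\<^sub>R c)"
    using assms(3) by (simp add: algebra_simps)
  then have "dist (c *\<^sub>R x) z = c * dist x (z /\<^sub>R c)"
    using assms(3) by (simp add: dist_norm)
  ultimately have "z /\<^sub>R c \<in> ball x e"
    using assms(3) by simp
  then have "c *\<^sub>R (z /\<^sub>R c) \<in> S"
    using assms by (meson conic_mul less_imp_le subsetD)
  then show "z \<in> S" using assms(3) by simp
qed

lemma minkowski_sum_eq_set_plus: "minkowski_sum A B = A + B"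
  by (auto simp: minkowski_sum_def set_plus_def)

lemma minkowski_sum_subset_convex_cone:
  fixes C :: "'a::real_vector set"
  shows "convex_cone C \<Longrightarrow> A \<subseteq> C \<Longrightarrow> B \<subseteq> C \<Longrightarrow> minkowski_sum A B \<subseteq> C"
  by (auto simp: minkowski_sum_def intro: convex_cone_add)

lemma zero_notin_minkowski_sum_pointed:
  assumes "C \<inter> uminus ` C = {0}" "A \<subseteq> C" "B \<subseteq> C" "0 \<notin> A"
  shows "0 \<notin> minkowski_sum A B"
  using pointed_add_eq_0[OF assms(1)] assms(2-4) by (fastforce simp: minkowski_sum_def)

lemma ball_subset_minkowski_sum:
  fixes A B :: "'a::real_normed_vector set"
  assumes "ball p r \<subseteq> A" "b \<in> B"
  shows "ball (p + b) r \<subseteq> minkowski_sum A B"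
proof
  fix y assume "y \<in> ball (p + b) r"
  moreover have "dist p (y - b) = dist (p + b) y" by (simp add: dist_norm algebra_simps)
  ultimately have "y - b \<in> A" using assms(1) by auto
  then show "y \<in> minkowski_sum A B" using assms(2) unfolding minkowski_sum_def by force
qed

lemma interior_minkowski_sum_nonempty:
  fixes A B :: "'a::real_normed_vector set"
  assumes "interior A \<noteq> {}" "B \<noteq> {}"
  shows "interior (minkowski_sum A B) \<noteq> {}"
proof -
  obtain p b where "p \<in> interior A" "b \<in> B" using assms by blast
  then obtain r where "r > 0" "ball p r \<subseteq> A" by (auto simp: mem_interior)
  then have "p + b \<in> interior (minkowski_sum A B)"
    using ball_subset_minkowski_sum[OF _ \<open>b \<in> B\<close>] by (meson mem_interior)
  then show ?thesis by blast
qed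

lemma unbounded_minkowski_sum:
  fixes A B :: "'a::real_normed_vector set"
  assumes "\<not> bounded A" "B \<noteq> {}"
  shows "\<not> bounded (minkowski_sum A B)"
proof
  assume "bounded (minkowski_sum A B)"
  obtain b where "b \<in> B" using assms(2) by blast
  then have "(\<lambda>a. b + a) ` A \<subseteq> minkowski_sum A B"
    by (auto simp: minkowski_sum_def add.commute)
  with \<open>bounded (minkowski_sum A B)\<close> have "bounded ((\<lambda>a. b + a) ` A)" by (rule bounded_subset)
  then have "bounded ((\<lambda>a. - b + a) ` (\<lambda>a. b + a) ` A)" by (rule bounded_translation)
  then show False using assms(1) by (simp add: image_image)
qed

lemma closed_minkowski_sum_coercive:
  fixes A B :: "'a::euclidean_space set"
  assumes "closed A" "closed B" "\<kappa> > 0"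
    and coercive: "\<And>x. x \<in> A \<union> B \<Longrightarrow> \<kappa> * norm x \<le> w \<bullet> x"
  shows "closed (minkowski_sum A B)"
proof -
  have "z \<in> minkowski_sum A B" if z: "z \<in> closure (minkowski_sum A B)" for z
  proof -
    define M where "M = w \<bullet> z + 1"
    define slice where "slice X = X \<inter> {x. w \<bullet> x \<le> M}" for X
    have "compact (slice X)" if "closed X" "X \<subseteq> A \<union> B" for X
    proof -
      have "norm x \<le> M / \<kappa>" if "x \<in> slice X" for x
        using that \<open>X \<subseteq> A \<union> B\<close> coercive[of x] assms(3)
        by (auto simp: slice_def pos_le_divide_eq mult.commute)
      then have "bounded (slice X)" by (auto simp: bounded_iff)
      moreover have "closed (slice X)"
        unfolding slice_def by (intro closed_Int \<open>closed X\<close> closed_halfspace_le)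
      ultimately show ?thesis by (simp add: compact_eq_bounded_closed)
    qed
    then have "compact (minkowski_sum (slice A) (slice B))"
      unfolding minkowski_sum_def using assms(1,2) by (intro compact_sums) auto
    moreover have "{x. w \<bullet> x < M} \<inter> minkowski_sum A B \<subseteq> minkowski_sum (slice A) (slice B)"
    proof
      fix x assume x: "x \<in> {x. w \<bullet> x < M} \<inter> minkowski_sum A B"
      then obtain a b where ab: "x = a + b" "a \<in> A" "b \<in> B" by (auto simp: minkowski_sum_def)
      have "0 \<le> w \<bullet> a" "0 \<le> w \<bullet> b"
        using coercive[of a] coercive[of b] ab assms(3) by (auto intro: order_trans[rotated])
      moreover have "w \<bullet> a + w \<bullet> b < M" using x ab by (simp add: inner_add_right)
      ultimately have "a \<in> slice A" "b \<in> slice B" using ab by (auto simp: slice_def)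
      then show "x \<in> minkowski_sum (slice A) (slice B)" using ab by (auto simp: minkowski_sum_def)
    qed
    moreover have "z \<in> closure ({x. w \<bullet> x < M} \<inter> minkowski_sum A B)"
      using open_Int_closure_subset[OF open_halfspace_lt, of w M "minkowski_sum A B"] z
      by (auto simp: M_def)
    ultimately have "z \<in> minkowski_sum (slice A) (slice B)"
      using closure_minimal[OF _ compact_imp_closed] by blast
    then show ?thesis by (auto simp: minkowski_sum_def slice_def)
  qed
  then show ?thesis by (auto simp flip: closure_subset_eq)
qed

lemma C_asymptotic_minkowski_sum_frontier:
  fixes C A1 A2 :: "'a::euclidean_space set"
  assumes A1: "C_asymptotic C A1" and A2: "C_asymptotic C A2"
    and C: "convex_cone C" "closed C" "frontier C \<noteq> {}" and "\<kappa> > 0"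
    and coercive: "\<And>c. c \<in> C \<Longrightarrow> \<kappa> * norm c \<le> w \<bullet> c" and "e > 0"
  obtains R where
    "\<And>x. x \<in> frontier (minkowski_sum A1 A2) \<Longrightarrow> R < norm x \<Longrightarrow> infdist x (frontier C) < e"
proof -
  let ?S = "minkowski_sum A1 A2"
  have "convex C" "conic C" using C(1) by (simp_all add: convex_cone_def)
  obtain R1 where R1: "\<And>y. R1 < w \<bullet> y \<Longrightarrow> ball y (2 * (e / 4)) \<subseteq> C \<Longrightarrow> ball y (e / 4) \<subseteq> A1"
    using C_asymptotic_deep_balls[OF A1 \<open>convex C\<close> C(3) \<open>\<kappa> > 0\<close> coercive, of "e / 4"] \<open>e > 0\<close>
    by auto
  obtain R2 where R2: "\<And>y. R2 < w \<bullet> y \<Longrightarrow> ball y (e / 2) \<subseteq> C \<Longrightarrow> y \<in> A2"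
    using C_asymptotic_deep_points[OF A2 \<open>convex C\<close> C(3) \<open>\<kappa> > 0\<close> coercive, of "e / 2"] \<open>e > 0\<close>
    by auto
  have "closure ?S \<subseteq> C"
    using A1 A2 C(1,2) by (intro closure_minimal minkowski_sum_subset_convex_cone)
      (auto simp: C_asymptotic_def)
  show ?thesis
  proof (rule that[of "2 * max R1 R2 / \<kappa>"], rule ccontr)
    fix x assume x: "x \<in> frontier ?S" "2 * max R1 R2 / \<kappa> < norm x"
      and "\<not> infdist x (frontier C) < e"
    let ?h = "(1 / 2) *\<^sub>R x"
    have "x \<in> C" using x(1) \<open>closure ?S \<subseteq> C\<close> by (auto simp: frontier_def)
    then have "ball x e \<subseteq> C"
      using \<open>\<not> infdist x (frontier C) < e\<close> by (simp add: le_infdist_frontier_imp_ball_subset)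
    then have "ball ?h (e / 2) \<subseteq> C"
      using conic_ball_scaleR_subset[OF \<open>conic C\<close>, of x e "1 / 2"] by simp
    have "2 * max R1 R2 < \<kappa> * norm x"
      using x(2) \<open>\<kappa> > 0\<close> by (simp add: pos_divide_less_eq mult.commute)
    also have "\<dots> \<le> w \<bullet> x" using coercive \<open>x \<in> C\<close> .
    finally have "max R1 R2 < w \<bullet> ?h" by simp
    then have "?h \<in> A2" "ball ?h (e / 4) \<subseteq> A1"
      using R1 R2 \<open>ball ?h (e / 2) \<subseteq> C\<close> by auto
    then have "ball (?h + ?h) (e / 4) \<subseteq> ?S" by (intro ball_subset_minkowski_sum)
    moreover have "?h + ?h = x" by (simp flip: scaleR_add_left)
    ultimately have "x \<in> interior ?S"
      unfolding mem_interior using \<open>e > 0\<close> by (intro exI[of _ "e / 4"]) auto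
    then show False using x(1) by (simp add: frontier_def)
  qed
qed

lemma pointed_cc_cone_convex_cone: "pointed_cc_cone C \<Longrightarrow> convex_cone C"
  by (auto simp: pointed_cc_cone_def convex_cone_def cone_def conic_def)

lemma pointed_cc_cone_frontier_nonempty:
  fixes C :: "'a::euclidean_space set"
  assumes "pointed_cc_cone C"
  shows "frontier C \<noteq> {}"
proof -
  have pointed: "C \<inter> uminus ` C = {0}" using assms by (simp add: pointed_cc_cone_def)
  obtain b :: 'a where "b \<in> Basis" using nonempty_Basis by blast
  then have "b \<noteq> 0" by (simp add: nonzero_Basis)
  moreover have "b \<in> uminus ` C" if "- b \<in> C" using that by (rule image_eqI[rotated]) simp
  ultimately have "C \<noteq> UNIV" using pointed by blast
  moreover have "C \<noteq> {}" using pointed by blast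
  ultimately show ?thesis by (simp add: frontier_eq_empty)
qed

theorem lemma3p5:
  fixes C A1 A2 :: "'a::euclidean_space set"
  assumes "DIM('a) \<ge> 2"
    and "pointed_cc_cone C"
    and "C_asymptotic C A1"
    and "C_asymptotic C A2"
  shows "C_asymptotic C (minkowski_sum A1 A2)"
proof -
  have C: "convex_cone C" "closed C" "C \<inter> uminus ` C = {0}" "frontier C \<noteq> {}"
    using assms(2) pointed_cc_cone_convex_cone pointed_cc_cone_frontier_nonempty
    by (auto simp: pointed_cc_cone_def)
  obtain w \<kappa> where "\<kappa> > 0" and coercive: "\<And>c. c \<in> C \<Longrightarrow> \<kappa> * norm c \<le> w \<bullet> c"
    using pointed_closed_convex_cone_coercive_functional[OF C(1-3)] by blast
  have A1: "\<not> bounded A1" "closed A1" "convex A1" "interior A1 \<noteq> {}" "A1 \<subseteq> C" "0 \<notin> A1"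
    using assms(3) by (auto simp: C_asymptotic_def)
  have A2: "\<not> bounded A2" "closed A2" "convex A2" "A2 \<noteq> {}" "A2 \<subseteq> C"
    using assms(4) by (auto simp: C_asymptotic_def)
  have "\<exists>R. \<forall>x\<in>frontier (minkowski_sum A1 A2). R < norm x \<longrightarrow> infdist x (frontier C) < e"
    if "e > 0" for e
    using C_asymptotic_minkowski_sum_frontier[OF assms(3,4) C(1,2,4) \<open>\<kappa> > 0\<close> coercive that]
    by metis
  moreover have "closed (minkowski_sum A1 A2)"
    using A1 A2 coercive \<open>\<kappa> > 0\<close> by (intro closed_minkowski_sum_coercive) auto
  moreover have "convex (minkowski_sum A1 A2)"
    using A1 A2 by (simp add: minkowski_sum_eq_set_plus convex_set_plus)
  ultimately show ?thesis
    unfolding C_asymptotic_def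
    using unbounded_minkowski_sum[OF A1(1) A2(4)]
      interior_minkowski_sum_nonempty[OF A1(4) A2(4)]
      minkowski_sum_subset_convex_cone[OF C(1) A1(5) A2(5)]
      zero_notin_minkowski_sum_pointed[OF C(3) A1(5) A2(5) A1(6)]
    by blast
qed

end
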